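(* Let $0<\mu<L_{\max}^{-1}$ with $L_{\max}=\max_i\|A_i\|_2^2$, and let $\{x^n\}$ be generated by GAITA (as in the context) from an arbitrary $x^0\in\mathbf{R}^N$. Then $\{x^n\}$ has a convergent subsequence. Moreover, the set $\mathcal{L}$ of limit points of $\{x^n\}$ is closed and connected.
   Context: Let $A\in\mathbf{R}^{m\times N}$ have columns $A_1,\dots,A_N$, $y\in\mathbf{R}^m$, $\lambda>0$, $q\in(0,1)$, and $T_\lambda(x)=\frac12\|Ax-y\|_2^2+\lambda\sum_{i=1}^N|x_i|^q$. For a step size $\mu>0$ set $\tau_{\mu,q}=\frac{2-q}{2-2q}(2\lambda\mu(1-q))^{\frac{1}{2-q}}$ and $\eta_{\mu,q}=(2\lambda\mu(1-q))^{\frac{1}{2-q}}$. For $z\in\mathbf{R}$ let $prox_{\mu,\lambda|\cdot|^q}(z)=\arg\min_{v\in\mathbf{R}}\{\frac{(z-v)^2}{2\mu}+\lambda|v|^q\}$ (a single point when $|z|\neq\tau_{\mu,q}$). Define $\mathcal{T}(z,w)$ as the unique element of $prox_{\mu,\lambda|\cdot|^q}(z)$ if $|z|\neq\tau_{\mu,q}$, and, if $|z|=\tau_{\mu,q}$, as $sgn(z)\eta_{\mu,q}$ when $w\neq0$ and $0$ when $w=0$ ($sgn(0)=0$). GAITA: given $x^0\in\mathbf{R}^N$, for $n=0,1,2,\dots$ let $i=(n\bmod N)+1$, $z_i^n=x_i^n-\mu A_i^T(Ax^n-y)$, $x_i^{n+1}=\mathcal{T}(z_i^n,x_i^n)$,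 $x_j^{n+1}=x_j^n$ for $j\neq i$. *)

theory Defs
  imports "HOL-Analysis.Analysis"
begin

definition tau_mq :: "real \<Rightarrow> real \<Rightarrow> real \<Rightarrow> real" where
  "tau_mq lam mu q = (2 - q) / (2 - 2 * q) * (2 * lam * mu * (1 - q)) powr (1 / (2 - q))"

definition eta_mq :: "real \<Rightarrow> real \<Rightarrow> real \<Rightarrow> real" where
  "eta_mq lam mu q = (2 * lam * mu * (1 - q)) powr (1 / (2 - q))"

definition prox_q :: "real \<Rightarrow> real \<Rightarrow> real \<Rightarrow> real \<Rightarrow> real set" where
  "prox_q lam mu q z =
     {v. \<forall>u. (z - v)^2 / (2 * mu) + lam * \<bar>v\<bar> powr q \<le> (z - u)^2 / (2 * mu) + lam * \<bar>u\<bar> powr q}"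

definition Tmap :: "real \<Rightarrow> real \<Rightarrow> real \<Rightarrow> real \<Rightarrow> real \<Rightarrow> real" where
  "Tmap lam mu q z w =
     (if \<bar>z\<bar> \<noteq> tau_mq lam mu q then (THE v. v \<in> prox_q lam mu q z)
      else if w \<noteq> 0 then sgn z * eta_mq lam mu q else 0)"

text \<open>One GAITA step at iteration n. The columns are labelled via a bijection
  idx from {0..<N} to the index type, so coordinate (n mod N)+1 of the paper is idx (n mod N).\<close>
definition gaita_step ::
  "real \<Rightarrow> real \<Rightarrow> real \<Rightarrow> real^'n^'m \<Rightarrow> real^'m \<Rightarrow> (nat \<Rightarrow> 'n) \<Rightarrow> nat \<Rightarrow> real^'n \<Rightarrow> real^'n" where
  "gaita_step lam mu q A y idx n x =
     (\<chi> j. if j = idx (n mod CARD('n))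
           then Tmap lam mu q (x $ j - mu * (column j A \<bullet> (A *v x - y))) (x $ j)
           else x $ j)"

definition limit_points :: "(nat \<Rightarrow> 'a::topological_space) \<Rightarrow> 'a set" where
  "limit_points x = {l. \<exists>r. strict_mono r \<and> (x \<circ> r) \<longlonglongrightarrow> l}"

end

theory Submission
  imports Defs
begin

text \<open>Each GAITA step minimizes, in one coordinate, the quadratic majorant of the least-squares
  term plus the penalty; since mu * norm (column i A)^2 < 1 this decreases the objective by at
  least c * dist (x (Suc n)) (x n)^2 with c > 0. The objective is bounded below and coercive,
  so the iterates are bounded and their steps tend to 0, and Ostrowski's theorem makes the
  limit set compact and connected. For the step to be a minimizer, the proximal set must be a
  singleton off the threshold |z| = tau (Tmap uses THE there) and contain both 0 and
  sgn z * eta at it.\<close>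

lemma mem_limit_points_iff:
  fixes x :: "nat \<Rightarrow> 'a::metric_space"
  shows "l \<in> limit_points x \<longleftrightarrow> (\<forall>e>0. \<forall>N. \<exists>n\<ge>N. dist (x n) l < e)"
proof
  assume "l \<in> limit_points x"
  then obtain r where r: "strict_mono r" "(x \<circ> r) \<longlonglongrightarrow> l" unfolding limit_points_def by blast
  show "\<forall>e>0. \<forall>N. \<exists>n\<ge>N. dist (x n) l < e"
  proof (intro allI impI)
    fix e :: real and N assume "e > 0"
    then obtain M where "\<And>k. k \<ge> M \<Longrightarrow> dist (x (r k)) l < e"
      using tendstoD[OF r(2)] by (auto simp: eventually_sequentially)
    moreover have "r (max M N) \<ge> N" using seq_suble[OF r(1), of "max M N"] by simp
    ultimately show "\<exists>n\<ge>N. dist (x n) l < e" by auto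
  qed
next
  assume "\<forall>e>0. \<forall>N. \<exists>n\<ge>N. dist (x n) l < e"
  hence "\<forall>N k. \<exists>n\<ge>N. dist (x n) l < inverse (real (Suc k))" by simp
  then obtain g where g: "\<And>N k. g N k \<ge> N" "\<And>N k. dist (x (g N k)) l < inverse (real (Suc k))"
    by metis
  define r where "r = rec_nat (g 0 0) (\<lambda>k m. g (Suc m) (Suc k))"
  have r_Suc: "r (Suc k) = g (Suc (r k)) (Suc k)" for k by (simp add: r_def)
  have "strict_mono r" unfolding strict_mono_Suc_iff r_Suc using g(1) Suc_le_eq by blast
  have r_dist: "dist (x (r k)) l < inverse (real (Suc k))" for k
  proof (cases k)
    case 0
    thus ?thesis using g(2)[of 0 0] by (simp add: r_def)
  next
    case (Suc j)
    show ?thesis using g(2)[of "Suc (r j)" "Suc j"] unfolding Suc r_Suc .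
  qed
  have "(\<lambda>k. dist ((x \<circ> r) k) l) \<longlonglongrightarrow> 0"
  proof (rule Lim_null_comparison[OF always_eventually LIMSEQ_inverse_real_of_nat], rule allI)
    fix k show "norm (dist ((x \<circ> r) k) l) \<le> inverse (real (Suc k))"
      using r_dist[of k] by simp
  qed
  hence "(x \<circ> r) \<longlonglongrightarrow> l" by (rule tendsto_dist_iff[THEN iffD2])
  with \<open>strict_mono r\<close> show "l \<in> limit_points x" unfolding limit_points_def by blast
qed

lemma limit_points_eq_Inter_closure:
  fixes x :: "nat \<Rightarrow> 'a::metric_space"
  shows "limit_points x = (\<Inter>N. closure (x ` {N..}))"
  unfolding set_eq_iff mem_limit_points_iff by (auto simp: closure_approachable)

lemma closed_limit_points:
  fixes x :: "nat \<Rightarrow> 'a::metric_space"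
  shows "closed (limit_points x)"
  unfolding limit_points_eq_Inter_closure by blast

lemma connected_Union_closed_segments:
  fixes x :: "nat \<Rightarrow> 'a::real_normed_vector"
  shows "connected (\<Union>n\<in>{N..}. closed_segment (x n) (x (Suc n)))"
proof -
  have chain: "connected (\<Union>n\<in>{N..M}. closed_segment (x n) (x (Suc n)))" if "N \<le> M" for M
    using that
  proof (induction M rule: dec_induct)
    case (step M)
    have "{N..Suc M} = insert (Suc M) {N..M}" using step.hyps by auto
    thus ?case using step.IH
      by (simp add: Un_commute) (intro connected_Un; force simp: step.hyps)
  qed simp
  have "(\<Union>n\<in>{N..}. closed_segment (x n) (x (Suc n)))
      = \<Union> ((\<lambda>M. \<Union>n\<in>{N..M}. closed_segment (x n) (x (Suc n))) ` {N..})"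
    by auto (meson atLeastAtMost_iff atLeast_iff order_refl)
  also have "connected \<dots>"
  proof (rule connected_Union)
    have "x N \<in> (\<Union>n\<in>{N..M}. closed_segment (x n) (x (Suc n)))" if "N \<le> M" for M
      using that by auto
    thus "\<Inter> ((\<lambda>M. \<Union>n\<in>{N..M}. closed_segment (x n) (x (Suc n))) ` {N..}) \<noteq> {}" by blast
  qed (use chain in auto)
  finally show ?thesis .
qed

lemma limit_points_eq_Inter_closure_segments:
  fixes x :: "nat \<Rightarrow> 'a::euclidean_space"
  assumes "(\<lambda>n. dist (x (Suc n)) (x n)) \<longlonglongrightarrow> 0"
  shows "limit_points x = (\<Inter>N. closure (\<Union>n\<in>{N..}. closed_segment (x n) (x (Suc n))))"
  unfolding limit_points_eq_Inter_closure
proof (intro equalityI INT_greatest)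
  fix N
  have "x ` {N..} \<subseteq> (\<Union>n\<in>{N..}. closed_segment (x n) (x (Suc n)))" by auto
  thus "(\<Inter>N. closure (x ` {N..})) \<subseteq> closure (\<Union>n\<in>{N..}. closed_segment (x n) (x (Suc n)))"
    by (meson INT_lower UNIV_I closure_mono order_trans)
next
  fix N
  show "(\<Inter>N. closure (\<Union>n\<in>{N..}. closed_segment (x n) (x (Suc n)))) \<subseteq> closure (x ` {N..})"
  proof (intro subsetI, unfold closure_approachable, intro allI impI)
    fix l e assume l: "l \<in> (\<Inter>N. closure (\<Union>n\<in>{N..}. closed_segment (x n) (x (Suc n))))"
      and "(e :: real) > 0"
    then obtain M where M: "\<And>n. n \<ge> M \<Longrightarrow> dist (x (Suc n)) (x n) < e / 2"
      using tendstoD[OF assms, of "e / 2"] by (auto simp: eventually_sequentially)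
    from l have "l \<in> closure (\<Union>n\<in>{max M N..}. closed_segment (x n) (x (Suc n)))" by blast
    then obtain p where "p \<in> (\<Union>n\<in>{max M N..}. closed_segment (x n) (x (Suc n)))"
      and "dist p l < e / 2"
      using \<open>e > 0\<close> unfolding closure_approachable by (meson half_gt_zero)
    then obtain n where n: "n \<ge> max M N" and p: "p \<in> closed_segment (x n) (x (Suc n))"
      and "dist p l < e / 2" by auto
    moreover have "dist (x n) p < e / 2"
      using dist_in_closed_segment[OF p] M[of n] n by (simp add: dist_commute)
    ultimately have "dist (x n) l < e" using dist_triangle_half_l[of "x n" p e l]
      by (simp add: dist_commute)
    thus "\<exists>y\<in>x ` {N..}. dist y l < e" using n by auto
  qed
qed

text \<open>Ostrowski's theorem: the limit set of a bounded sequence with vanishing steps is the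
  intersection of the nested compact connected sets formed by the tails of its polygonal path.\<close>
lemma connected_limit_points:
  fixes x :: "nat \<Rightarrow> 'a::euclidean_space"
  assumes "bounded (range x)" and "(\<lambda>n. dist (x (Suc n)) (x n)) \<longlonglongrightarrow> 0"
  shows "connected (limit_points x)"
  unfolding limit_points_eq_Inter_closure_segments[OF assms(2)]
proof (rule connected_nest)
  obtain c B where B: "range x \<subseteq> cball c B" using assms(1) bounded_subset_cball by blast
  fix N
  have "closed_segment (x n) (x (Suc n)) \<subseteq> cball c B" for n
    using B by (intro closed_segment_subset convex_cball) (auto simp del: mem_cball)
  hence "bounded (\<Union>n\<in>{N..}. closed_segment (x n) (x (Suc n)))"
    by (meson UN_least bounded_cball bounded_subset)
  thus "compact (closure (\<Union>n\<in>{N..}. closed_segment (x n) (x (Suc n))))" by simp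
  show "connected (closure (\<Union>n\<in>{N..}. closed_segment (x n) (x (Suc n))))"
    by (intro connected_imp_connected_closure connected_Union_closed_segments)
next
  fix M N :: nat assume "M \<le> N"
  thus "closure (\<Union>n\<in>{N..}. closed_segment (x n) (x (Suc n)))
      \<subseteq> closure (\<Union>n\<in>{M..}. closed_segment (x n) (x (Suc n)))"
    by (intro closure_mono UN_mono) auto
qed

lemma dist_Suc_tendsto_0_of_sufficient_decrease:
  fixes x :: "nat \<Rightarrow> 'a::metric_space" and f :: "nat \<Rightarrow> real"
  assumes "c > 0" and decrease: "\<And>n. f (Suc n) + c * (dist (x (Suc n)) (x n))^2 \<le> f n"
    and lower: "\<And>n. b \<le> f n"
  shows "(\<lambda>n. dist (x (Suc n)) (x n)) \<longlonglongrightarrow> 0"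
proof -
  have "decseq f"
  proof (rule decseq_SucI)
    fix n
    have "0 \<le> c * (dist (x (Suc n)) (x n))^2" using assms(1) by simp
    thus "f (Suc n) \<le> f n" using decrease[of n] by linarith
  qed
  then obtain L where L: "f \<longlonglongrightarrow> L" using decseq_convergent lower by blast
  have "(\<lambda>n. f n - f (Suc n)) \<longlonglongrightarrow> L - L" by (intro tendsto_diff L LIMSEQ_Suc[OF L])
  hence lim: "(\<lambda>n. (f n - f (Suc n)) / c) \<longlonglongrightarrow> 0"
    using tendsto_divide_zero[of "\<lambda>n. f n - f (Suc n)" sequentially c] by simp
  have bound: "norm ((dist (x (Suc n)) (x n))^2) \<le> (f n - f (Suc n)) / c" for n
  proof -
    have "(dist (x (Suc n)) (x n))^2 * c \<le> f n - f (Suc n)" using decrease[of n] by (simp add: mult.commute)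
    thus ?thesis using assms(1) by (simp add: pos_le_divide_eq)
  qed
  have "(\<lambda>n. (dist (x (Suc n)) (x n))^2) \<longlonglongrightarrow> 0"
    by (rule Lim_null_comparison[OF always_eventually lim]) (use bound in blast)
  from tendsto_real_sqrt[OF this] show ?thesis by simp
qed

lemma powr_ge_tangent_at_1:
  fixes s a :: real
  assumes "s > 0" "a \<le> 0"
  shows "1 + a * (s - 1) \<le> s powr a"
proof -
  have "1 + a * (s - 1) \<le> 1 + a * ln s"
    using ln_le_minus_one[OF assms(1)] assms(2) by (simp add: mult_left_mono_neg)
  also have "\<dots> \<le> exp (a * ln s)" by (metis exp_ge_add_one_self)
  also have "\<dots> = s powr a" using assms(1) by (simp add: powr_def mult.commute)
  finally show ?thesis .
qed

definition lq_objective :: "real \<Rightarrow> real \<Rightarrow> real^'n^'m \<Rightarrow> real^'m \<Rightarrow> real^'n \<Rightarrow> real" where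
  "lq_objective lam q A y x = (norm (A *v x - y))^2 / 2 + lam * (\<Sum>j\<in>UNIV. \<bar>x $ j\<bar> powr q)"

lemma sum_add_axis_update:
  fixes x :: "real^'n" and f :: "real \<Rightarrow> real"
  shows "(\<Sum>j\<in>UNIV. f ((x + d *\<^sub>R axis i 1) $ j)) = (\<Sum>j\<in>UNIV. f (x $ j)) + (f (x $ i + d) - f (x $ i))"
proof -
  have "(\<Sum>j\<in>UNIV. f ((x + d *\<^sub>R axis i 1) $ j) - f (x $ j))
      = (\<Sum>j\<in>UNIV. if j = i then f (x $ i + d) - f (x $ i) else 0)"
    by (rule sum.cong) (auto simp: axis_def)
  thus ?thesis by (simp add: sum_subtractf)
qed

lemma lq_objective_add_axis:
  fixes A :: "real^'n^'m"
  shows "lq_objective lam q A y (x + d *\<^sub>R axis i 1) = lq_objective lam q A y x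
    + d * (column i A \<bullet> (A *v x - y)) + d^2 * (norm (column i A))^2 / 2
    + lam * (\<bar>x $ i + d\<bar> powr q - \<bar>x $ i\<bar> powr q)"
proof -
  have res: "A *v (x + d *\<^sub>R axis i 1) - y = (A *v x - y) + d *\<^sub>R column i A"
    by (simp add: algebra_simps matrix_vector_mult_basis)
  have "(norm (A *v (x + d *\<^sub>R axis i 1) - y))^2
      = (norm (A *v x - y))^2 + 2 * d * (column i A \<bullet> (A *v x - y)) + d^2 * (norm (column i A))^2"
    unfolding res power2_norm_eq_inner by (simp add: algebra_simps inner_commute power2_eq_square)
  thus ?thesis
    unfolding lq_objective_def sum_add_axis_update[where f = "\<lambda>t. \<bar>t\<bar> powr q"]
    by (simp add: algebra_simps)
qed

lemma bounded_sublevel_lq_objective: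
  fixes A :: "real^'n^'m"
  assumes "lam > 0" "q > 0"
  shows "bounded {x. lq_objective lam q A y x \<le> c}"
proof -
  define B where "B = (c / lam) powr (1 / q)"
  have coord: "\<bar>x $ j\<bar> \<le> B" if "lq_objective lam q A y x \<le> c" for x j
  proof -
    have "\<bar>x $ j\<bar> powr q \<le> (\<Sum>j\<in>UNIV. \<bar>x $ j\<bar> powr q)" by (rule member_le_sum) auto
    hence "lam * \<bar>x $ j\<bar> powr q \<le> lq_objective lam q A y x"
      unfolding lq_objective_def using assms(1) by (simp add: add_increasing)
    hence "\<bar>x $ j\<bar> powr q \<le> c / lam" using that assms(1) by (simp add: pos_le_divide_eq mult.commute)
    hence "(\<bar>x $ j\<bar> powr q) powr (1 / q) \<le> B" unfolding B_def using assms(2) by (intro powr_mono2) auto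
    thus ?thesis using assms(2) by (simp add: powr_powr)
  qed
  have "norm x \<le> real CARD('n) * B" if "lq_objective lam q A y x \<le> c" for x
  proof -
    have "norm x \<le> (\<Sum>j\<in>UNIV. \<bar>x $ j\<bar>)" by (rule norm_le_l1_cart)
    also have "\<dots> \<le> (\<Sum>j\<in>(UNIV :: 'n set). B)" using coord[OF that] by (rule sum_mono)
    finally show ?thesis by simp
  qed
  thus ?thesis unfolding bounded_iff by blast
qed

locale lq_prox =
  fixes lam mu q :: real
  assumes lam_pos: "lam > 0" and mu_pos: "mu > 0" and q_pos: "q > 0" and q_less_1: "q < 1"
begin

abbreviation "tau \<equiv> tau_mq lam mu q"
abbreviation "eta \<equiv> eta_mq lam mu q"

definition prox_obj :: "real \<Rightarrow> real \<Rightarrow> real" where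
  "prox_obj z v = (z - v)^2 / (2 * mu) + lam * \<bar>v\<bar> powr q"

definition threshold_fun :: "real \<Rightarrow> real" where
  "threshold_fun v = v / 2 + lam * mu * v powr (q - 1)"

lemma mem_prox_q_iff: "v \<in> prox_q lam mu q z \<longleftrightarrow> (\<forall>u. prox_obj z v \<le> prox_obj z u)"
  unfolding prox_q_def prox_obj_def by simp

lemma prox_obj_uminus: "prox_obj (-z) (-v) = prox_obj z v"
  unfolding prox_obj_def by (simp add: power2_commute)

lemma mem_prox_q_uminus: "-v \<in> prox_q lam mu q (-z) \<longleftrightarrow> v \<in> prox_q lam mu q z"
  unfolding mem_prox_q_iff by (metis prox_obj_uminus minus_minus)

lemma prox_obj_abs: "prox_obj z v = prox_obj z \<bar>v\<bar> + z * (\<bar>v\<bar> - v) / mu"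
  unfolding prox_obj_def using mu_pos by (simp add: field_simps power2_eq_square)

lemma prox_obj_diff_0:
  assumes "v > 0"
  shows "prox_obj z v - prox_obj z 0 = v / mu * (threshold_fun v - z)"
proof -
  have "v powr q = v * v powr (q - 1)"
    using assms by (simp add: powr_mult_base)
  thus ?thesis
    unfolding prox_obj_def threshold_fun_def using assms mu_pos q_pos
    by (simp add: power2_eq_square field_simps)
qed

lemma eta_pos: "eta > 0"
  unfolding eta_mq_def using lam_pos mu_pos q_less_1 by simp

lemma tau_eq: "tau = (2 - q) / (2 - 2 * q) * eta"
  unfolding tau_mq_def eta_mq_def ..

lemma tau_pos: "tau > 0"
  unfolding tau_eq using eta_pos q_less_1 by simp

lemma lam_mu_eta_powr: "lam * mu * eta powr (q - 1) = eta / (2 * (1 - q))"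
proof -
  have "eta = eta powr (2 - q) * eta powr (q - 1)"
    using eta_pos by (simp add: powr_add[symmetric])
  also have "eta powr (2 - q) = 2 * lam * mu * (1 - q)"
    unfolding eta_mq_def using lam_pos mu_pos q_less_1 by (simp add: powr_powr)
  finally show ?thesis using q_less_1 by (simp add: field_simps)
qed

lemma threshold_fun_eta: "threshold_fun eta = tau"
  unfolding threshold_fun_def lam_mu_eta_powr tau_eq using q_less_1 by (simp add: field_simps)

text \<open>tau is the minimum of the threshold function, attained at eta; with s = v / eta this is
  the tangent inequality for s powr (q - 1) at s = 1.\<close>
lemma tau_le_threshold_fun:
  assumes "v > 0"
  shows "tau \<le> threshold_fun v"
proof -
  define s where "s = v / eta"
  have s: "s > 0" and v: "v = eta * s" using assms eta_pos by (auto simp: s_def)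
  have "lam * mu * v powr (q - 1) = (lam * mu * eta powr (q - 1)) * s powr (q - 1)"
    unfolding v using eta_pos s by (simp add: powr_mult)
  hence "lam * mu * v powr (q - 1) = eta / (2 * (1 - q)) * s powr (q - 1)"
    unfolding lam_mu_eta_powr .
  hence "threshold_fun v = eta * s / 2 + eta / (2 * (1 - q)) * s powr (q - 1)"
    unfolding threshold_fun_def by (simp add: v)
  also have "\<dots> = eta / 2 * (s + s powr (q - 1) / (1 - q))"
    using q_less_1 by (simp add: field_simps)
  finally have "threshold_fun v = eta / 2 * (s + s powr (q - 1) / (1 - q))" .
  moreover have "(2 - q) / (1 - q) \<le> s + s powr (q - 1) / (1 - q)"
  proof -
    have "2 - q \<le> (1 - q) * s + s powr (q - 1)"
      using powr_ge_tangent_at_1[OF s, of "q - 1"] q_less_1 by (simp add: algebra_simps)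
    hence "(2 - q) / (1 - q) \<le> ((1 - q) * s + s powr (q - 1)) / (1 - q)"
      using q_less_1 by (simp add: divide_right_mono)
    thus ?thesis using q_less_1 by (simp add: add_divide_distrib)
  qed
  moreover have "tau = eta / 2 * ((2 - q) / (1 - q))"
    unfolding tau_eq by (simp add: field_simps)
  ultimately show ?thesis
    using eta_pos by (metis mult_left_mono half_gt_zero less_eq_real_def)
qed

lemma prox_obj_0_le:
  assumes "0 \<le> z"
  shows "prox_obj z 0 + \<bar>v\<bar> / mu * (tau - z) \<le> prox_obj z v"
proof (cases "v = 0")
  case False
  have "\<bar>v\<bar> / mu * (tau - z) \<le> \<bar>v\<bar> / mu * (threshold_fun \<bar>v\<bar> - z)"
    using tau_le_threshold_fun[of "\<bar>v\<bar>"] False mu_pos by (intro mult_left_mono) auto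
  also have "\<dots> = prox_obj z \<bar>v\<bar> - prox_obj z 0"
    using prox_obj_diff_0[of "\<bar>v\<bar>"] False by simp
  also have "prox_obj z \<bar>v\<bar> \<le> prox_obj z v"
    using prox_obj_abs[of z v] assms mu_pos by simp
  finally show ?thesis by simp
qed simp

lemma prox_q_below_tau:
  assumes "0 \<le> z" "z < tau"
  shows "prox_q lam mu q z = {0}"
proof -
  have less: "prox_obj z 0 < prox_obj z v" if "v \<noteq> 0" for v
  proof -
    have "0 < \<bar>v\<bar> / mu * (tau - z)" using that assms(2) mu_pos by simp
    thus ?thesis using prox_obj_0_le[OF assms(1), of v] by linarith
  qed
  show ?thesis
    unfolding mem_prox_q_iff set_eq_iff
    by (metis less less_eq_real_def not_le singleton_iff)
qed

lemma mem_prox_q_tau: "0 \<in> prox_q lam mu q tau" "eta \<in> prox_q lam mu q tau"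
proof -
  have min: "prox_obj tau 0 \<le> prox_obj tau u" for u
    using prox_obj_0_le[of tau u] tau_pos by simp
  moreover have "prox_obj tau eta = prox_obj tau 0"
    using prox_obj_diff_0[OF eta_pos, of tau] threshold_fun_eta by simp
  ultimately show "0 \<in> prox_q lam mu q tau" "eta \<in> prox_q lam mu q tau"
    unfolding mem_prox_q_iff by auto
qed

lemma prox_q_nonempty:
  assumes "0 \<le> z"
  shows "\<exists>v. v \<in> prox_q lam mu q z"
proof -
  have "continuous_on {0..2*z} (prox_obj z)"
    unfolding prox_obj_def
    by (intro continuous_intros continuous_on_powr') (use q_pos mu_pos in auto)
  then obtain v where v: "v \<in> {0..2*z}" "\<And>u. u \<in> {0..2*z} \<Longrightarrow> prox_obj z v \<le> prox_obj z u"
    using continuous_attains_inf[of "{0..2*z}" "prox_obj z"] assms by auto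
  have "prox_obj z v \<le> prox_obj z u" for u
  proof (cases "\<bar>u\<bar> \<le> 2 * z")
    case True
    hence "prox_obj z v \<le> prox_obj z \<bar>u\<bar>" using v(2) by simp
    also have "\<dots> \<le> prox_obj z u" using prox_obj_abs[of z u] assms mu_pos by simp
    finally show ?thesis .
  next
    case False
    have "(z - u)^2 - z^2 = u * (u - 2 * z)" by (simp add: power2_eq_square algebra_simps)
    also have "\<dots> \<ge> 0" using False assms by (cases "u \<ge> 0") (auto simp: zero_le_mult_iff)
    finally have "z^2 \<le> (z - u)^2" by simp
    hence "z^2 / (2 * mu) \<le> (z - u)^2 / (2 * mu)" using mu_pos by (simp add: divide_right_mono)
    hence "prox_obj z 0 \<le> prox_obj z u"
      unfolding prox_obj_def using lam_pos by (simp add: add_increasing2)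
    thus ?thesis using v(2)[of 0] assms by simp
  qed
  thus ?thesis unfolding mem_prox_q_iff by blast
qed

text \<open>Comparing the minimizer with 0 yields the curvature bound, which makes the stationarity
  equation injective on minimizers (lemma stationarity_map_strict_mono).\<close>
lemma mem_prox_q_above_tau:
  assumes "tau < z" "v \<in> prox_q lam mu q z"
  shows "v > 0" "v + lam * mu * q * v powr (q - 1) = z"
    and "lam * mu * (1 - q) * v powr (q - 2) \<le> 1 / 2"
proof -
  have min: "prox_obj z v \<le> prox_obj z u" for u using assms(2) mem_prox_q_iff by blast
  have "prox_obj z eta - prox_obj z 0 < 0"
    unfolding prox_obj_diff_0[OF eta_pos] threshold_fun_eta
    using assms(1) eta_pos mu_pos by (simp add: mult_pos_neg divide_neg_pos)
  hence "v \<noteq> 0" using min[of eta] by auto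
  moreover have "\<not> v < 0"
  proof
    assume "v < 0"
    hence "0 < \<bar>v\<bar> - v" by simp
    hence "0 < z * (\<bar>v\<bar> - v) / mu" using assms(1) tau_pos mu_pos by (intro divide_pos_pos mult_pos_pos) auto
    thus False using min[of "\<bar>v\<bar>"] prox_obj_abs[of z v] by linarith
  qed
  ultimately show v: "v > 0" by simp
  let ?p = "\<lambda>t. (z - t)^2 / (2 * mu) + lam * t powr q"
  have "(?p has_real_derivative (-(z - v) / mu + lam * (q * v powr (q - 1)))) (at v)"
    using v mu_pos by (auto intro!: derivative_eq_intros simp: field_simps power2_eq_square)
  moreover have "\<forall>t. \<bar>v - t\<bar> < v \<longrightarrow> ?p v \<le> ?p t"
  proof (intro allI impI)
    fix t assume "\<bar>v - t\<bar> < v"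
    hence "t > 0" by linarith
    thus "?p v \<le> ?p t" using min[of t] v unfolding prox_obj_def by simp
  qed
  ultimately have "-(z - v) / mu + lam * (q * v powr (q - 1)) = 0"
    using DERIV_local_min v by blast
  thus stat: "v + lam * mu * q * v powr (q - 1) = z" using mu_pos by (simp add: field_simps)
  have "v / mu * (threshold_fun v - z) \<le> 0"
    using min[of 0] prox_obj_diff_0[OF v, of z] by simp
  hence "threshold_fun v \<le> z" using v mu_pos by (simp add: divide_le_0_iff mult_le_0_iff)
  hence "lam * mu * (1 - q) * v powr (q - 1) \<le> v / 2"
    using stat unfolding threshold_fun_def by (simp add: algebra_simps)
  moreover have "v powr (q - 1) = v * v powr (q - 2)"
    using powr_mult_base[of v "q - 2"] v by simp
  ultimately have "v * (lam * mu * (1 - q) * v powr (q - 2)) \<le> v * (1 / 2)"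
    by (simp add: algebra_simps)
  thus "lam * mu * (1 - q) * v powr (q - 2) \<le> 1 / 2" using v by simp
qed

lemma stationarity_map_strict_mono:
  assumes "0 < a" "lam * mu * (1 - q) * a powr (q - 2) \<le> 1 / 2" "a < b"
  shows "a + lam * mu * q * a powr (q - 1) < b + lam * mu * q * b powr (q - 1)"
  using assms(3)
proof (rule DERIV_pos_imp_increasing)
  fix t assume t: "a \<le> t" "t \<le> b"
  hence "t > 0" using assms(1) by linarith
  have "t powr (q - 2) \<le> a powr (q - 2)" using powr_mono2'[of "q - 2" a t] t assms(1) q_less_1 by simp
  hence "lam * mu * (1 - q) * t powr (q - 2) \<le> lam * mu * (1 - q) * a powr (q - 2)"
    using lam_pos mu_pos q_less_1 by (intro mult_left_mono) auto
  hence "lam * mu * (1 - q) * t powr (q - 2) \<le> 1 / 2"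
    using assms(2) by linarith
  hence "q * (lam * mu * (1 - q) * t powr (q - 2)) \<le> q * (1 / 2)"
    using q_pos by (intro mult_left_mono) auto
  hence "q * (lam * mu * (1 - q) * t powr (q - 2)) < 1"
    using q_less_1 by linarith
  hence "0 < 1 + lam * mu * q * ((q - 1) * t powr (q - 1 - 1))"
    by (simp add: algebra_simps)
  moreover have "((\<lambda>t. t + lam * mu * q * t powr (q - 1)) has_real_derivative
      1 + lam * mu * q * ((q - 1) * t powr (q - 1 - 1))) (at t)"
    using \<open>t > 0\<close> by (auto intro!: derivative_eq_intros)
  ultimately show "\<exists>y. ((\<lambda>t. t + lam * mu * q * t powr (q - 1)) has_real_derivative y) (at t) \<and> 0 < y"
    by blast
qed

lemma prox_q_above_tau_unique:
  assumes "tau < z" "v \<in> prox_q lam mu q z" "w \<in> prox_q lam mu q z"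
  shows "v = w"
proof -
  have "\<not> a < b" if "a \<in> prox_q lam mu q z" "b \<in> prox_q lam mu q z" for a b
  proof
    assume "a < b"
    note a = mem_prox_q_above_tau[OF assms(1) that(1)]
    have "a + lam * mu * q * a powr (q - 1) < b + lam * mu * q * b powr (q - 1)"
      using stationarity_map_strict_mono[OF a(1) a(3) \<open>a < b\<close>] .
    thus False using a(2) mem_prox_q_above_tau(2)[OF assms(1) that(2)] by simp
  qed
  thus ?thesis using assms(2,3) by (meson linorder_neqE_linordered_idom)
qed

lemma ex1_prox_q:
  assumes "\<bar>z\<bar> \<noteq> tau"
  shows "\<exists>!v. v \<in> prox_q lam mu q z"
proof -
  have nonneg: "\<exists>!v. v \<in> prox_q lam mu q z" if "0 \<le> z" "z \<noteq> tau" for z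
  proof (cases "z < tau")
    case True thus ?thesis using prox_q_below_tau[OF that(1)] by auto
  next
    case False
    with that(2) have "tau < z" by simp
    thus ?thesis using prox_q_nonempty[OF that(1)] prox_q_above_tau_unique by blast
  qed
  show ?thesis
  proof (cases "0 \<le> z")
    case False
    with assms have "\<exists>!v. v \<in> prox_q lam mu q (-z)" by (intro nonneg) auto
    then obtain v where "\<And>u. u \<in> prox_q lam mu q (-z) \<longleftrightarrow> u = v" by blast
    hence "u \<in> prox_q lam mu q z \<longleftrightarrow> u = -v" for u
      by (metis mem_prox_q_uminus minus_minus)
    thus ?thesis by simp
  qed (use assms nonneg in auto)
qed

lemma Tmap_mem_prox_q: "Tmap lam mu q z w \<in> prox_q lam mu q z"
proof (cases "\<bar>z\<bar> = tau")
  case False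
  thus ?thesis unfolding Tmap_def using theI'[OF ex1_prox_q[OF False]] by simp
next
  case True
  have "0 \<in> prox_q lam mu q z \<and> sgn z * eta \<in> prox_q lam mu q z"
  proof (cases "0 \<le> z")
    case True
    with \<open>\<bar>z\<bar> = tau\<close> tau_pos have "z = tau" by auto
    thus ?thesis using mem_prox_q_tau tau_pos by simp
  next
    case False
    with \<open>\<bar>z\<bar> = tau\<close> have "z = - tau" by auto
    thus ?thesis using mem_prox_q_tau mem_prox_q_uminus[of 0 tau] mem_prox_q_uminus[of eta tau]
      tau_pos by simp
  qed
  thus ?thesis unfolding Tmap_def using True by simp
qed

text \<open>The proximal inequality against the old coordinate cancels the linear term of the exact
  quadratic expansion of the objective.\<close>
lemma lq_objective_prox_step:
  fixes A :: "real^'n^'m"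
  assumes "v \<in> prox_q lam mu q (x $ i - mu * (column i A \<bullet> (A *v x - y)))"
  shows "lq_objective lam q A y (x + (v - x $ i) *\<^sub>R axis i 1)
    + (1 / mu - (norm (column i A))^2) / 2 * (v - x $ i)^2 \<le> lq_objective lam q A y x"
proof -
  define g where "g = column i A \<bullet> (A *v x - y)"
  define d where "d = v - x $ i"
  have "prox_obj (x $ i - mu * g) v \<le> prox_obj (x $ i - mu * g) (x $ i)"
    using assms mem_prox_q_iff unfolding g_def by blast
  hence "d^2 / (2 * mu) + d * g + lam * \<bar>v\<bar> powr q \<le> lam * \<bar>x $ i\<bar> powr q"
    unfolding prox_obj_def d_def using mu_pos by (simp add: field_simps power2_eq_square)
  thus ?thesis
    unfolding lq_objective_add_axis g_def[symmetric] d_def[symmetric]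
    using mu_pos by (simp add: d_def field_simps)
qed

lemma lq_objective_gaita_step:
  fixes A :: "real^'n^'m"
  defines "L \<equiv> MAX i. (norm (column i A))^2"
  shows "lq_objective lam q A y (gaita_step lam mu q A y idx n x)
    + (1 / mu - L) / 2 * (dist (gaita_step lam mu q A y idx n x) x)^2 \<le> lq_objective lam q A y x"
proof -
  define i where "i = idx (n mod CARD('n))"
  define v where "v = Tmap lam mu q (x $ i - mu * (column i A \<bullet> (A *v x - y))) (x $ i)"
  have step: "gaita_step lam mu q A y idx n x = x + (v - x $ i) *\<^sub>R axis i 1"
    unfolding gaita_step_def v_def i_def by (auto simp: vec_eq_iff axis_def)
  have "(norm (column i A))^2 \<le> L" unfolding L_def by (rule Max_ge) auto
  hence "(1 / mu - L) / 2 * (v - x $ i)^2 \<le> (1 / mu - (norm (column i A))^2) / 2 * (v - x $ i)^2"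
    by (intro mult_right_mono) auto
  moreover have "(dist (x + (v - x $ i) *\<^sub>R axis i 1) x)^2 = (v - x $ i)^2"
    unfolding dist_norm by simp
  moreover have "lq_objective lam q A y (x + (v - x $ i) *\<^sub>R axis i 1)
      + (1 / mu - (norm (column i A))^2) / 2 * (v - x $ i)^2 \<le> lq_objective lam q A y x"
    unfolding v_def by (rule lq_objective_prox_step[OF Tmap_mem_prox_q])
  ultimately show ?thesis unfolding step by simp
qed

end

theorem theorem1:
  fixes A :: "real^'n^'m" and y :: "real^'m" and lam q mu :: real
    and idx :: "nat \<Rightarrow> 'n" and x :: "nat \<Rightarrow> real^'n"
  assumes "lam > 0" and "0 < q" and "q < 1"
    and "bij_betw idx {..<CARD('n)} UNIV"
    and "mu > 0"
    and "mu * (MAX i. (norm (column i A))^2) < 1"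
    and "\<And>n. x (Suc n) = gaita_step lam mu q A y idx n (x n)"
  shows "(\<exists>r l. strict_mono r \<and> (x \<circ> r) \<longlonglongrightarrow> l)
         \<and> closed (limit_points x) \<and> connected (limit_points x)"
proof -
  interpret lq_prox lam mu q using assms by unfold_locales
  define T where "T = lq_objective lam q A y"
  define c where "c = (1 / mu - (MAX i. (norm (column i A))^2)) / 2"
  have "c > 0" using assms(5,6) by (simp add: c_def field_simps)
  have decrease: "T (x (Suc n)) + c * (dist (x (Suc n)) (x n))^2 \<le> T (x n)" for n
    unfolding T_def c_def assms(7) by (rule lq_objective_gaita_step)
  have "T (x n) \<ge> 0" for n
    unfolding T_def lq_objective_def using assms(1)
    by (intro add_nonneg_nonneg mult_nonneg_nonneg sum_nonneg) auto
  hence steps: "(\<lambda>n. dist (x (Suc n)) (x n)) \<longlonglongrightarrow> 0"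
    by (intro dist_Suc_tendsto_0_of_sufficient_decrease[of c "\<lambda>n. T (x n)" x 0] \<open>c > 0\<close> decrease)
  have "T (x (Suc n)) \<le> T (x n)" for n
    using decrease[of n] \<open>c > 0\<close> by (smt (verit) mult_nonneg_nonneg zero_le_power2)
  hence "T (x n) \<le> T (x 0)" for n by (rule lift_Suc_antimono_le) simp
  hence "range x \<subseteq> {z. T z \<le> T (x 0)}" by auto
  hence "bounded (range x)"
    using bounded_sublevel_lq_objective[OF assms(1,2)] bounded_subset unfolding T_def by blast
  thus ?thesis
    using bounded_imp_convergent_subsequence closed_limit_points connected_limit_points steps
    by blast
qed

end
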